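(* For every $\xi \in \Xi^{+}$, $$\phi_D(\xi)=\min_{\mu\in\Xi^{+}}\sum_{x\in\mathcal{X}} H_D(\mu,x)\,\xi(x),\qquad H_D(\mu,x)=\frac{\det^{1/p}[M(\mu)]}{p}\,f^\top(x)M^{-1}(\mu)f(x),$$ and the minimum is attained at $\mu=\xi$.
   Context: $\mathcal{X}$ is a finite set (the design space) and $f:\mathcal{X}\to\mathbb{R}^p$ is a given function. $\Xi$ denotes the set of all probability measures $\xi$ on $\mathcal{X}$ (i.e. $\xi(x)\ge 0$, $\sum_{x\in\mathcal{X}}\xi(x)=1$). The information matrix of $\xi\in\Xi$ is $M(\xi)=\sum_{x\in\mathcal{X}} f(x)f^\top(x)\xi(x)$, and $\Xi^{+}=\{\mu\in\Xi: M(\mu)\text{ is nonsingular}\}$. The $D$-optimality criterion is $\phi_D(\xi)=\det^{1/p}[M(\xi)]$. *)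

theory Defs
  imports "HOL-Analysis.Analysis"
begin

definition design_measures :: "('x::finite \<Rightarrow> real) set" where
  "design_measures = {\<xi>. (\<forall>x. \<xi> x \<ge> 0) \<and> (\<Sum>x\<in>UNIV. \<xi> x) = 1}"

definition info_matrix :: "('x::finite \<Rightarrow> real^'p) \<Rightarrow> ('x \<Rightarrow> real) \<Rightarrow> real^'p^'p" where
  "info_matrix f \<xi> = (\<Sum>x\<in>UNIV. \<xi> x *\<^sub>R (\<chi> i j. f x $ i * f x $ j))"

definition design_measures_plus :: "('x::finite \<Rightarrow> real^'p) \<Rightarrow> ('x \<Rightarrow> real) set" where
  "design_measures_plus f = {\<mu> \<in> design_measures. invertible (info_matrix f \<mu>)}"

definition phiD :: "('x::finite \<Rightarrow> real^'p) \<Rightarrow> ('x \<Rightarrow> real) \<Rightarrow> real" where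
  "phiD f \<xi> = det (info_matrix f \<xi>) powr (1 / real CARD('p))"

definition HD :: "('x::finite \<Rightarrow> real^'p) \<Rightarrow> ('x \<Rightarrow> real) \<Rightarrow> 'x \<Rightarrow> real" where
  "HD f \<mu> x = det (info_matrix f \<mu>) powr (1 / real CARD('p)) / real CARD('p)
      * (f x \<bullet> (matrix_inv (info_matrix f \<mu>) *v f x))"

end

theory Submission
  imports Defs
begin

text \<open>
  Write \<open>N = M(\<mu>)\<close> and \<open>M = M(\<xi>)\<close>. Then \<open>\<Sum>\<^sub>x H\<^sub>D(\<mu>,x) \<xi>(x) = det\<^sup>1\<^sup>/\<^sup>p N \<cdot> tr(N\<inverse> M) / p\<close>.
  Since \<open>N\<close> is positive definite and \<open>M\<close> positive semidefinite, both are diagonalised by one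
  congruence: \<open>V\<^sup>T N V = I\<close> and \<open>V\<^sup>T M V = diag \<lambda>\<close> with \<open>\<lambda> \<ge> 0\<close>, whence \<open>N\<inverse> = V V\<^sup>T\<close>,
  \<open>tr(N\<inverse> M) = \<Sum> \<lambda>\<^sub>i\<close> and \<open>det M = \<Prod> \<lambda>\<^sub>i \<cdot> det N\<close>. The inequality \<open>det\<^sup>1\<^sup>/\<^sup>p M \<le> det\<^sup>1\<^sup>/\<^sup>p N \<cdot> tr(N\<inverse> M) / p\<close>
  is then the AM-GM inequality for the \<open>\<lambda>\<^sub>i\<close>, and for \<open>\<mu> = \<xi>\<close> it is an equality since \<open>tr(N\<inverse> N) = p\<close>.
  The simultaneous diagonalisation rests on the spectral theorem for real symmetric matrices,
  which follows by maximising the Rayleigh quotient on invariant subspaces.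
\<close>

lemma symmetric_matrix_inner_commute:
  fixes A :: "real^'n^'n"
  assumes "transpose A = A"
  shows "x \<bullet> (A *v y) = y \<bullet> (A *v x)"
  by (metis assms dot_lmul_matrix transpose_matrix_vector inner_commute)

lemma eq_0_if_linear_le_quadratic:
  fixes a b :: real
  assumes "\<And>t. 2 * t * a \<le> t^2 * b"
  shows "a = 0"
proof -
  define c where "c = \<bar>b\<bar> + 1"
  have c: "c > 0" "b < 2 * c" unfolding c_def by (auto simp: abs_if)
  have "2 * (a / c) * a \<le> (a / c)^2 * b" by (rule assms)
  hence "a^2 * (2 * c - b) \<le> 0" using c by (simp add: field_simps power2_eq_square)
  hence "a^2 \<le> 0" using c by (simp add: mult_le_0_iff)
  thus ?thesis by simp
qed

section \<open>The spectral theorem for real symmetric matrices\<close>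

lemma rayleigh_maximizer_is_eigenvector:
  fixes A :: "real^'n^'n"
  assumes sym: "transpose A = A" and S: "subspace S" and inv: "\<forall>x\<in>S. A *v x \<in> S"
    and vS: "v \<in> S" and vv: "v \<bullet> v = 1"
    and max: "\<And>u. u \<in> S \<Longrightarrow> u \<bullet> (A *v u) \<le> (v \<bullet> (A *v v)) * (u \<bullet> u)"
  shows "A *v v = (v \<bullet> (A *v v)) *\<^sub>R v"
proof -
  define lam where "lam = v \<bullet> (A *v v)"
  \<comment> \<open>maximality at \<open>v + t w\<close> for all \<open>t\<close> forbids a term linear in \<open>t\<close>\<close>
  have orth: "w \<bullet> (A *v v) = 0" if wS: "w \<in> S" and wv: "w \<bullet> v = 0" for w
  proof (rule eq_0_if_linear_le_quadratic)
    fix t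
    have "v + t *\<^sub>R w \<in> S" using vS wS S by (simp add: subspace_add subspace_scale)
    from max[OF this] show "2 * t * (w \<bullet> (A *v v)) \<le> t^2 * (lam * (w \<bullet> w) - w \<bullet> (A *v w))"
      using vv wv symmetric_matrix_inner_commute[OF sym, of v w] unfolding lam_def
      by (simp add: inner_commute power2_eq_square algebra_simps)
  qed
  define w where "w = A *v v - lam *\<^sub>R v"
  have wS: "w \<in> S" unfolding w_def using vS inv S by (simp add: subspace_diff subspace_scale)
  have wv: "w \<bullet> v = 0" unfolding w_def lam_def using vv
    by (simp add: inner_diff_left inner_diff_right inner_commute)
  have "w \<bullet> w = w \<bullet> (A *v v) - lam * (w \<bullet> v)" unfolding w_def by (simp add: inner_diff_right)
  also have "\<dots> = 0" using orth[OF wS wv] wv by simp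
  finally show ?thesis unfolding w_def lam_def by simp
qed

lemma symmetric_matrix_invariant_subspace_eigenvector:
  fixes A :: "real^'n^'n"
  assumes sym: "transpose A = A" and S: "subspace S" and inv: "\<forall>x\<in>S. A *v x \<in> S"
    and ne: "S \<noteq> {0}"
  obtains v c where "v \<in> S" "norm v = 1" "A *v v = c *\<^sub>R v"
proof -
  define K where "K = S \<inter> sphere 0 1"
  have "compact K" unfolding K_def by (intro closed_Int_compact closed_subspace S compact_sphere)
  moreover have "K \<noteq> {}"
  proof -
    obtain x where "x \<in> S" "x \<noteq> 0" using ne S subspace_0 by blast
    hence "(1 / norm x) *\<^sub>R x \<in> K" using S unfolding K_def by (simp add: subspace_scale)
    thus ?thesis by blast
  qed
  moreover have "continuous_on K (\<lambda>x. x \<bullet> (A *v x))"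
    by (intro continuous_intros linear_continuous_on matrix_vector_mul_bounded_linear)
  ultimately obtain v where vK: "v \<in> K" and vmax: "\<And>y. y \<in> K \<Longrightarrow> y \<bullet> (A *v y) \<le> v \<bullet> (A *v v)"
    using continuous_attains_sup by metis
  have vS: "v \<in> S" and nv: "norm v = 1" using vK unfolding K_def by auto
  have "u \<bullet> (A *v u) \<le> (v \<bullet> (A *v v)) * (u \<bullet> u)" if "u \<in> S" for u
  proof (cases "u = 0")
    case False
    have "(1 / norm u) *\<^sub>R u \<in> K" using that False S unfolding K_def by (simp add: subspace_scale)
    from vmax[OF this] show ?thesis using False
      by (simp add: matrix_vector_mult_scaleR field_simps dot_square_norm power2_eq_square)
  qed simp
  with rayleigh_maximizer_is_eigenvector[OF sym S inv vS] nv that vS show ?thesis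
    by (metis norm_eq_1)
qed

lemma symmetric_matrix_eigenvector_orthogonal_complement:
  fixes A :: "real^'n^'n"
  assumes "transpose A = A" and "A *v v = c *\<^sub>R v" and "v \<bullet> y = 0"
  shows "v \<bullet> (A *v y) = 0"
  using assms symmetric_matrix_inner_commute[OF assms(1), of v y]
  by (simp add: inner_commute)

lemma symmetric_matrix_invariant_subspace_eigenbasis:
  fixes A :: "real^'n^'n"
  assumes sym: "transpose A = A"
  shows "subspace S \<Longrightarrow> dim S = n \<Longrightarrow> \<forall>x\<in>S. A *v x \<in> S \<Longrightarrow>
    \<exists>B. B \<subseteq> S \<and> finite B \<and> card B = n \<and> pairwise orthogonal B \<and>
        (\<forall>v\<in>B. norm v = 1 \<and> (\<exists>c. A *v v = c *\<^sub>R v))"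
proof (induction n arbitrary: S)
  case 0
  then show ?case by (intro exI[of _ "{}"]) auto
next
  case (Suc n)
  have "S \<noteq> {0}" using Suc.prems(2) by auto
  then obtain v c where vS: "v \<in> S" and nv: "norm v = 1" and ev: "A *v v = c *\<^sub>R v"
    using symmetric_matrix_invariant_subspace_eigenvector[OF sym Suc.prems(1,3)] by blast
  define S' where "S' = {y \<in> S. \<forall>x\<in>span {v}. orthogonal x y}"
  have S'_iff: "y \<in> S' \<longleftrightarrow> y \<in> S \<and> v \<bullet> y = 0" for y
    unfolding S'_def orthogonal_def by (auto simp: span_singleton)
  have "subspace S'"
    using Suc.prems(1) unfolding subspace_def by (auto simp: S'_iff inner_add_right)
  moreover have "dim S' = n"
    using dim_subspace_orthogonal_to_vectors[OF subspace_span Suc.prems(1), of "{v}"]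
      Suc.prems(1,2) vS nv unfolding S'_def by (auto simp: span_minimal split: if_splits)
  moreover have "\<forall>x\<in>S'. A *v x \<in> S'"
    using Suc.prems(3) symmetric_matrix_eigenvector_orthogonal_complement[OF sym ev]
    by (auto simp: S'_iff)
  ultimately obtain B' where B': "B' \<subseteq> S'" "finite B'" "card B' = n" "pairwise orthogonal B'"
      "\<forall>v\<in>B'. norm v = 1 \<and> (\<exists>c. A *v v = c *\<^sub>R v)"
    using Suc.IH by blast
  have orthB: "orthogonal v y" if "y \<in> B'" for y
    using that B'(1) S'_iff unfolding orthogonal_def by blast
  have "v \<notin> B'" using orthB nv by (force simp: orthogonal_def norm_eq_1)
  show ?case
  proof (intro exI[of _ "insert v B'"] conjI)
    show "insert v B' \<subseteq> S" using vS B'(1) S'_iff by auto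
    show "card (insert v B') = Suc n" using B'(2,3) \<open>v \<notin> B'\<close> by simp
    show "pairwise orthogonal (insert v B')"
      using B'(4) orthB by (auto simp: pairwise_insert orthogonal_commute)
  qed (use B' nv ev in auto)
qed

definition diag_mat :: "('n \<Rightarrow> real) \<Rightarrow> real^'n^'n" where
  "diag_mat d = (\<chi> i j. if i = j then d i else 0)"

lemma diag_mat_diagonal: "diag_mat d $ i $ i = d i"
  by (simp add: diag_mat_def)

lemma det_diag_mat: "det (diag_mat d) = (\<Prod>i\<in>UNIV. d i)"
  by (subst det_diagonal) (auto simp: diag_mat_def)

lemma diag_mat_mult:
  fixes a b :: "'n::finite \<Rightarrow> real"
  shows "diag_mat a ** diag_mat b = diag_mat (\<lambda>i. a i * b i)"
proof -
  have "(if i = k then a i else 0) * (if k = j then b k else 0)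
     = (if k = i then (if i = j then a i * b i else 0) else 0)" for i j k :: 'n by auto
  thus ?thesis by (simp add: diag_mat_def matrix_matrix_mult_def vec_eq_iff)
qed

lemma transpose_diag_mat: "transpose (diag_mat a) = diag_mat a"
  by (simp add: diag_mat_def transpose_def vec_eq_iff)

lemma trace_diag_mat: "trace (diag_mat d) = (\<Sum>i\<in>UNIV. d i)"
  by (simp add: trace_def diag_mat_diagonal)

lemma transpose_mult_mult_entry:
  fixes P A R :: "real^'n^'n"
  shows "(transpose P ** A ** R) $ i $ j = column i P \<bullet> (A *v column j R)"
  by (simp add: matrix_matrix_mult_def transpose_def column_def inner_vec_def
      matrix_vector_mult_def sum_distrib_left sum_distrib_right mult_ac) (rule sum.swap)

lemma symmetric_matrix_orthogonally_diagonalizable: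
  fixes A :: "real^'n^'n"
  assumes sym: "transpose A = A"
  obtains Q d where "orthogonal_matrix Q" "transpose Q ** A ** Q = diag_mat d"
proof -
  obtain B where B: "finite B" "card B = CARD('n)" "pairwise orthogonal B"
      "\<forall>v\<in>B. norm v = 1 \<and> (\<exists>c. A *v v = c *\<^sub>R v)"
    using symmetric_matrix_invariant_subspace_eigenbasis[OF sym, of UNIV "CARD('n)"] by auto
  obtain h where h: "bij_betw h (UNIV :: 'n set) B"
    using finite_same_card_bij[of "UNIV :: 'n set" B] B(1,2) by auto
  have hB: "h i \<in> B" for i using h by (auto simp: bij_betw_def)
  define Q :: "real^'n^'n" where "Q = (\<chi> i j. h j $ i)"
  have colQ: "column j Q = h j" for j by (simp add: Q_def column_def vec_eq_iff)
  have "\<forall>j. \<exists>c. A *v h j = c *\<^sub>R h j" using B(4) hB by blast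
  then obtain d where d: "\<And>j. A *v h j = d j *\<^sub>R h j" by metis
  have nh: "h j \<bullet> h j = 1" for j using B(4) hB by (simp add: norm_eq_1)
  have oh: "i \<noteq> j \<Longrightarrow> h i \<bullet> h j = 0" for i j
    using B(3) hB h unfolding pairwise_def orthogonal_def bij_betw_def inj_def by metis
  have "orthogonal_matrix Q"
    unfolding orthogonal_matrix_orthonormal_columns colQ
    using nh oh by (auto simp: norm_eq_1 orthogonal_def)
  moreover have "transpose Q ** A ** Q = diag_mat d"
    by (simp add: vec_eq_iff transpose_mult_mult_entry colQ d diag_mat_def nh oh)
  ultimately show ?thesis using that by blast
qed

section \<open>Positive definite matrices\<close>

lemma matrix_inv_left:
  fixes A :: "'a::field^'n^'n"
  assumes "invertible A"
  shows "matrix_inv A ** A = mat 1"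
  using someI_ex[OF assms[unfolded invertible_def]] unfolding matrix_inv_def by blast

lemma matrix_inv_eqI:
  fixes A B :: "'a::field^'n^'n"
  assumes "A ** B = mat 1"
  shows "matrix_inv A = B"
proof -
  have "invertible A" using assms invertible_right_inverse by blast
  hence "matrix_inv A = matrix_inv A ** (A ** B)" using assms by simp
  also have "\<dots> = B" using matrix_inv_left[OF \<open>invertible A\<close>] by (simp add: matrix_mul_assoc)
  finally show ?thesis .
qed

lemma det_congruence:
  fixes W A :: "real^'n^'n"
  shows "det (transpose W ** A ** W) = (det W)^2 * det A"
  by (simp add: det_mul power2_eq_square)

lemma psd_congruent_diagonal_nonneg:
  fixes A Q :: "real^'n^'n"
  assumes "\<And>y. 0 \<le> y \<bullet> (A *v y)" and "transpose Q ** A ** Q = diag_mat d"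
  shows "0 \<le> d i"
  using assms(1)[of "column i Q"] transpose_mult_mult_entry[of Q A Q i i]
  by (simp add: assms(2) diag_mat_diagonal)

lemma psd_invertible_congruent_identity:
  fixes A :: "real^'n^'n"
  assumes sym: "transpose A = A" and psd: "\<And>y. 0 \<le> y \<bullet> (A *v y)" and inv: "invertible A"
  obtains W :: "real^'n^'n" where "transpose W ** A ** W = mat 1" "W ** transpose W = matrix_inv A"
proof -
  obtain Q d where Q: "orthogonal_matrix Q" and QAQ: "transpose Q ** A ** Q = diag_mat d"
    using symmetric_matrix_orthogonally_diagonalizable[OF sym] by blast
  have "(det Q)^2 = 1" using det_orthogonal_matrix[OF Q] by auto
  hence "det A = (\<Prod>i\<in>UNIV. d i)" using det_congruence[of Q A] QAQ by (simp add: det_diag_mat)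
  moreover have "det A \<noteq> 0" using inv invertible_det_nz by blast
  ultimately have dpos: "0 < d i" for i
    using psd_congruent_diagonal_nonneg[OF psd QAQ, of i] by (metis less_eq_real_def UNIV_I finite prod_zero_iff)
  define W where "W = Q ** diag_mat (\<lambda>i. 1 / sqrt (d i))"
  have "transpose W ** A ** W
      = diag_mat (\<lambda>i. 1 / sqrt (d i)) ** (transpose Q ** A ** Q) ** diag_mat (\<lambda>i. 1 / sqrt (d i))"
    unfolding W_def by (simp add: matrix_transpose_mul transpose_diag_mat matrix_mul_assoc)
  also have "\<dots> = diag_mat (\<lambda>i. 1)"
    unfolding QAQ diag_mat_mult by (simp add: abs_of_pos[OF dpos] dpos[THEN less_imp_neq, THEN not_sym])
  also have "\<dots> = mat 1" by (simp add: diag_mat_def mat_def vec_eq_iff)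
  finally have WAW: "transpose W ** A ** W = mat 1" .
  hence "(A ** W) ** transpose W = mat 1"
    using matrix_left_right_inverse by (metis matrix_mul_assoc)
  hence "matrix_inv A = W ** transpose W" by (intro matrix_inv_eqI) (simp add: matrix_mul_assoc)
  with WAW that show ?thesis by simp
qed

lemma simultaneous_diagonalization:
  fixes A B :: "real^'n^'n"
  assumes "transpose A = A" and "\<And>y. 0 \<le> y \<bullet> (A *v y)" and "invertible A"
    and symB: "transpose B = B"
  obtains V :: "real^'n^'n" and d where "transpose V ** A ** V = mat 1" "V ** transpose V = matrix_inv A"
    "transpose V ** B ** V = diag_mat d"
proof -
  obtain W :: "real^'n^'n" where WAW: "transpose W ** A ** W = mat 1"
    and WW: "W ** transpose W = matrix_inv A"
    by (rule psd_invertible_congruent_identity[OF assms(1-3)])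
  have "transpose (transpose W ** B ** W) = transpose W ** B ** W"
    by (simp add: matrix_transpose_mul symB matrix_mul_assoc)
  then obtain P :: "real^'n^'n" and d where P: "orthogonal_matrix P"
    and PBP: "transpose P ** (transpose W ** B ** W) ** P = diag_mat d"
    by (rule symmetric_matrix_orthogonally_diagonalizable)
  have PP: "transpose P ** P = mat 1" "P ** transpose P = mat 1"
    using P unfolding orthogonal_matrix_def by auto
  have congr: "transpose (W ** P) ** C ** (W ** P) = transpose P ** (transpose W ** C ** W) ** P"
    for C :: "real^'n^'n"
    by (simp add: matrix_transpose_mul matrix_mul_assoc)
  show ?thesis
  proof (rule that[of "W ** P"])
    show "transpose (W ** P) ** A ** (W ** P) = mat 1" unfolding congr WAW using PP(1) by simp
    show "transpose (W ** P) ** B ** (W ** P) = diag_mat d" unfolding congr PBP ..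
    have "W ** P ** transpose (W ** P) = W ** (P ** transpose P) ** transpose W"
      by (simp add: matrix_transpose_mul matrix_mul_assoc)
    thus "W ** P ** transpose (W ** P) = matrix_inv A" unfolding PP(2) WW[symmetric] by simp
  qed
qed

lemma det_root_le_trace_inverse_mult:
  fixes A B :: "real^'n^'n"
  assumes "transpose A = A" and "\<And>y. 0 \<le> y \<bullet> (A *v y)" and "invertible A"
    and "transpose B = B" and psdB: "\<And>y. 0 \<le> y \<bullet> (B *v y)"
  shows "det B powr (1 / CARD('n)) \<le> det A powr (1 / CARD('n)) / CARD('n) * trace (matrix_inv A ** B)"
proof -
  obtain V :: "real^'n^'n" and d where VAV: "transpose V ** A ** V = mat 1"
    and VV: "V ** transpose V = matrix_inv A" and VBV: "transpose V ** B ** V = diag_mat d"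
    by (rule simultaneous_diagonalization[OF assms(1-4)])
  have d: "0 \<le> d i" for i by (rule psd_congruent_diagonal_nonneg[OF psdB VBV])
  have dA: "(det V)^2 * det A = 1" using det_congruence[of V A] VAV by simp
  hence "det A > 0" by (smt (verit) zero_less_mult_iff zero_le_power2)
  have "det B = ((det V)^2 * det B) * det A" using dA by (simp add: algebra_simps)
  also have "(det V)^2 * det B = (\<Prod>i\<in>UNIV. d i)" using det_congruence[of V B] VBV by (simp add: det_diag_mat)
  finally have detB: "det B = (\<Prod>i\<in>UNIV. d i) * det A" .
  have "trace (matrix_inv A ** B) = trace (V ** (transpose V ** B))"
    unfolding VV[symmetric] by (simp add: matrix_mul_assoc)
  also have "\<dots> = (\<Sum>i\<in>UNIV. d i)" unfolding trace_mul_sym[of V] VBV trace_diag_mat ..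
  finally have tr: "trace (matrix_inv A ** B) = (\<Sum>i\<in>UNIV. d i)" .
  have "det B powr (1 / CARD('n)) = (\<Prod>i\<in>UNIV. d i) powr (1 / CARD('n)) * det A powr (1 / CARD('n))"
    unfolding detB using d \<open>det A > 0\<close> by (simp add: powr_mult prod_nonneg)
  also have "\<dots> \<le> (\<Sum>i\<in>UNIV. d i) / CARD('n) * det A powr (1 / CARD('n))"
    using arith_geom_mean[of "UNIV :: 'n set" d] d
    by (intro mult_right_mono) (simp_all add: sum_divide_distrib)
  finally show ?thesis unfolding tr by (simp add: field_simps)
qed

section \<open>Information matrices\<close>

lemma info_matrix_inner:
  "y \<bullet> (info_matrix f \<xi> *v z) = (\<Sum>x\<in>UNIV. \<xi> x * (f x \<bullet> y) * (f x \<bullet> z))"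
  by (simp add: info_matrix_def inner_vec_def matrix_vector_mult_def
      sum_distrib_left sum_distrib_right mult_ac)
    (rule trans, rule sum.cong[OF refl], rule sum.swap, rule sum.swap)

lemma transpose_info_matrix: "transpose (info_matrix f \<xi>) = info_matrix f \<xi>"
  by (simp add: info_matrix_def transpose_def vec_eq_iff mult_ac)

lemma info_matrix_psd:
  assumes "\<xi> \<in> design_measures"
  shows "0 \<le> y \<bullet> (info_matrix f \<xi> *v y)"
  using assms unfolding info_matrix_inner design_measures_def
  by (auto intro!: sum_nonneg simp: mult.assoc)

lemma weighted_quadratic_form_eq_trace:
  "(\<Sum>x\<in>UNIV. \<xi> x * (f x \<bullet> (C *v f x))) = trace (C ** info_matrix f \<xi>)"
  by (simp add: trace_def matrix_matrix_mult_def info_matrix_def inner_vec_def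
      matrix_vector_mult_def sum_distrib_left mult_ac)
    (rule sym, rule trans, rule sum.cong[OF refl], rule sum.swap, rule sum.swap)

lemma sum_HD_eq_trace:
  fixes f :: "'x::finite \<Rightarrow> real^'p"
  shows "(\<Sum>x\<in>UNIV. HD f \<mu> x * \<xi> x) = det (info_matrix f \<mu>) powr (1 / CARD('p)) / CARD('p)
     * trace (matrix_inv (info_matrix f \<mu>) ** info_matrix f \<xi>)"
  unfolding HD_def weighted_quadratic_form_eq_trace[symmetric]
  by (simp add: sum_distrib_left mult_ac)

theorem theorem1:
  fixes f :: "'x::finite \<Rightarrow> real^'p" and \<xi> :: "'x \<Rightarrow> real"
  assumes "\<xi> \<in> design_measures_plus f"
  shows "phiD f \<xi> = (INF \<mu>\<in>design_measures_plus f. \<Sum>x\<in>UNIV. HD f \<mu> x * \<xi> x)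
       \<and> (\<forall>\<mu>\<in>design_measures_plus f. (\<Sum>x\<in>UNIV. HD f \<xi> x * \<xi> x) \<le> (\<Sum>x\<in>UNIV. HD f \<mu> x * \<xi> x))
       \<and> phiD f \<xi> = (\<Sum>x\<in>UNIV. HD f \<xi> x * \<xi> x)"
proof -
  have xi: "\<xi> \<in> design_measures" and "invertible (info_matrix f \<xi>)"
    using assms unfolding design_measures_plus_def by auto
  then have eq: "phiD f \<xi> = (\<Sum>x\<in>UNIV. HD f \<xi> x * \<xi> x)"
    unfolding phiD_def sum_HD_eq_trace by (simp add: matrix_inv_left trace_I)
  have le: "\<forall>\<mu>\<in>design_measures_plus f. (\<Sum>x\<in>UNIV. HD f \<xi> x * \<xi> x) \<le> (\<Sum>x\<in>UNIV. HD f \<mu> x * \<xi> x)"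
  proof
    fix \<mu> assume "\<mu> \<in> design_measures_plus f"
    then have "\<mu> \<in> design_measures" "invertible (info_matrix f \<mu>)"
      unfolding design_measures_plus_def by auto
    then show "(\<Sum>x\<in>UNIV. HD f \<xi> x * \<xi> x) \<le> (\<Sum>x\<in>UNIV. HD f \<mu> x * \<xi> x)"
      unfolding eq[symmetric] phiD_def sum_HD_eq_trace
      by (intro det_root_le_trace_inverse_mult transpose_info_matrix info_matrix_psd xi)
  qed
  have "(INF \<mu>\<in>design_measures_plus f. \<Sum>x\<in>UNIV. HD f \<mu> x * \<xi> x) = (\<Sum>x\<in>UNIV. HD f \<xi> x * \<xi> x)"
    by (rule cInf_eq_minimum) (use assms le in auto)
  with eq le show ?thesis by simp
qed

end
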